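(* Let $\rho_{AB}$ be a bipartite state on $\mathbb{C}^{d_A}\otimes\mathbb{C}^N$. Let $X^{(1)},\dots,X^{(M)}$ be measurements on Alice's side, where $X^{(i)}$ has outcomes $x^{(i)}_1,\dots,x^{(i)}_N$. Let $Y^{(1)},\dots,Y^{(M)}$ be non-degenerate projective measurements on Bob's side, where $Y^{(i)}$ is given by an orthonormal basis $\{|b^{(i)}_k\rangle\}_{k=1}^N$ of $\mathbb{C}^N$. Assume that $A$ cannot steer $B$ for these measurements. Concretely, assume there exist: - a probability distribution $\{\kappa_\lambda\}$ over a finite set of hidden variables $\lambda$, - probability distributions $p^{(\lambda)}(x^{(i)})=(p^{(\lambda)}_1(x^{(i)}),\dots,p^{(\lambda)}_N(x^{(i)}))$, for each $\lambda$ and each $i$, - density matrices $\rho^{(\lambda)}$ on $\mathbb{C}^N$, such that the assemblage $\sigma_{j|X^{(i)}}=\mathrm{Tr}_A[(E^{(i)}_j\otimes \mathbb{1})\rho_{AB}]$ satisfies $$\sigma_{j|X^{(i)}}=\sum_\lambda \kappa_\lambda\, p^{(\lambda)}_j(x^{(i)})\,\rho^{(\lambda)}\quad\text{for all } i,j.$$ Here $E^{(i)}_j$ is the POVM element of outcome $x^{(i)}_j$. Define $p(x^{(i)}_j)=\mathrm{Tr}\,\sigma_{j|X^{(i)}}$. Define $\vec q(y^{(i)}|x^{(i)}_j)\in\mathbb{R}^N$ to be the conditional distribution of Bob's outcome for $Y^{(i)}$ given Alice's outcome $x^{(i)}_j$, with components $\langle b^{(i)}_k|\sigma_{j|X^{(i)}}|b^{(i)}_k\rangle/p(x^{(i)}_j)$.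 Then $$\bigoplus_{i=1}^{M}\Big[\sum_{j=1}^N \vec q^{\,\downarrow}(y^{(i)}|x^{(i)}_j)\,p(x^{(i)}_j)\Big]\prec \vec s ,$$ where $\vec s\in\mathbb{R}^{MN}$ is the least upper bound (in the majorization order) of the set $\{\bigoplus_{i=1}^M \vec P_\rho(Y^{(i)}) : \rho \text{ a density matrix on }\mathbb{C}^N\}$. Here $\vec P_\rho(Y^{(i)})=(\langle b^{(i)}_k|\rho|b^{(i)}_k\rangle)_{k=1}^N$.
   Context: For $\vec v\in\mathbb{R}^n$, $\vec v^{\,\downarrow}$ denotes $\vec v$ with its components rearranged in non-increasing order. $\oplus$ denotes concatenation (direct sum) of vectors. For $\vec u,\vec w\in\mathbb{R}^n$ with equal component sums, $\vec u\prec\vec w$ (majorization) means $\sum_{k=1}^{m}u^{\downarrow}_k\le \sum_{k=1}^m w^{\downarrow}_k$ for all $m=1,\dots,n$. If the vectors have different lengths, the shorter one is padded with zeros. The least upper bound $\vec s$ is a vector with the following two properties: - every element of the set is majorized by $\vec s$; - $\vec s$ is majorized by every vector that majorizes all elements of the set. Such an $\vec s$ exists in the majorization lattice. *)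

theory Defs
  imports "Jordan_Normal_Form.Matrix"
begin

definition mtrace :: "complex mat \<Rightarrow> complex" where
  "mtrace A = (\<Sum>k<dim_row A. A $$ (k, k))"

definition expect :: "complex vec \<Rightarrow> complex mat \<Rightarrow> complex" where
  "expect v A = (A *\<^sub>v v) \<bullet> conjugate v"

definition psd :: "nat \<Rightarrow> complex mat \<Rightarrow> bool" where
  "psd n A \<longleftrightarrow> A \<in> carrier_mat n n \<and>
     (\<forall>v \<in> carrier_vec n. expect v A \<in> \<real> \<and> 0 \<le> Re (expect v A))"

definition density :: "nat \<Rightarrow> complex mat \<Rightarrow> bool" where
  "density n \<rho> \<longleftrightarrow> psd n \<rho> \<and> mtrace \<rho> = 1"

definition povm :: "nat \<Rightarrow> nat \<Rightarrow> (nat \<Rightarrow> complex mat) \<Rightarrow> bool" where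
  "povm d N E \<longleftrightarrow> (\<forall>j<N. psd d (E j)) \<and>
     (\<forall>a<d. \<forall>a'<d. (\<Sum>j<N. E j $$ (a, a')) = (if a = a' then 1 else 0))"

definition onb :: "nat \<Rightarrow> (nat \<Rightarrow> complex vec) \<Rightarrow> bool" where
  "onb N b \<longleftrightarrow> (\<forall>k<N. b k \<in> carrier_vec N) \<and>
     (\<forall>k<N. \<forall>k'<N. b k \<bullet> conjugate (b k') = (if k = k' then 1 else 0))"

text \<open>Tr_A[(E \<otimes> 1) \<rho>_AB] for \<rho>_AB on C^dA \<otimes> C^N, with the
  Kronecker index convention (a, b) \<mapsto> a * N + b.\<close>
definition cond_state :: "nat \<Rightarrow> nat \<Rightarrow> complex mat \<Rightarrow> complex mat \<Rightarrow> complex mat" where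
  "cond_state dA N \<rho>AB E = mat N N (\<lambda>(r, c).
     \<Sum>a<dA. \<Sum>a'<dA. E $$ (a, a') * \<rho>AB $$ (a' * N + r, a * N + c))"

definition desc :: "real list \<Rightarrow> real list" where
  "desc xs = rev (sort xs)"

definition majorized :: "real list \<Rightarrow> real list \<Rightarrow> bool" (infix \<open>\<prec>\<^sub>m\<close> 50) where
  "u \<prec>\<^sub>m w \<longleftrightarrow> (let n = max (length u) (length w);
       u' = u @ replicate (n - length u) 0;
       w' = w @ replicate (n - length w) 0
     in sum_list u = sum_list w \<and>
        (\<forall>m\<in>{1..n}. sum_list (take m (desc u')) \<le> sum_list (take m (desc w'))))"

definition maj_lub :: "nat \<Rightarrow> real list set \<Rightarrow> real list \<Rightarrow> bool" where
  "maj_lub n S s \<longleftrightarrow> length s = n \<and> (\<forall>x\<in>S. x \<prec>\<^sub>m s) \<and>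
     (\<forall>t. length t = n \<longrightarrow> (\<forall>x\<in>S. x \<prec>\<^sub>m t) \<longrightarrow> s \<prec>\<^sub>m t)"

definition prob_vec :: "nat \<Rightarrow> (nat \<Rightarrow> complex vec) \<Rightarrow> complex mat \<Rightarrow> real list" where
  "prob_vec N b \<rho> = map (\<lambda>k. Re (expect (b k) \<rho>)) [0..<N]"

end

theory Submission
  imports Defs "HOL-Combinatorics.Permutations"
begin

(*
  Write top_sum m x for the sum of the m largest entries of x, so that u majorized by w means
  equal totals and top_sum m u <= top_sum m w for every m. As top_sum m x is the largest sum of
  entries of x over m indices, it is sublinear under nonnegative combinations, and the top-m sum
  of a direct sum is attained by some split m = m_1 + ... + m_M over the blocks.

  Under the LHS model the unnormalised conditional vector p(x_j) q(y|x_j) of Bob is the mixture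
  sum_lambda kappa_lambda p_j^lambda(x) P_{rho_lambda}(Y). Splitting m over the blocks and using
  sublinearity, first in j and then in lambda, bounds the top-m sum of the left-hand side by
  sum_lambda kappa_lambda top_sum m (+)_i P_{rho_lambda}(Y^(i)), and each of these direct sums
  is majorized by s because it belongs to the set whose least upper bound is s.
*)

lemma length_desc [simp]: "length (desc xs) = length xs"
  unfolding desc_def by simp

lemma mset_desc [simp]: "mset (desc xs) = mset xs"
  unfolding desc_def by simp

lemma sum_list_desc [simp]: "sum_list (desc xs) = sum_list xs"
  by (metis mset_desc sum_mset_sum_list)

lemma set_desc [simp]: "set (desc xs) = set xs"
  unfolding desc_def by simp

lemma sorted_wrt_desc: "sorted_wrt (\<ge>) (desc xs)"
  unfolding desc_def by (simp add: sorted_wrt_rev)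

lemma desc_desc [simp]: "desc (desc xs) = desc xs"
  unfolding desc_def by (metis mset_rev mset_sort properties_for_sort sorted_sort)

lemma desc_map_divide:
  fixes t :: real
  assumes "0 < t"
  shows "desc (map (\<lambda>x. x / t) xs) = map (\<lambda>x. x / t) (desc xs)"
proof -
  have "sorted (map (\<lambda>x. x / t) (sort xs))"
    unfolding sorted_map
    by (rule sorted_wrt_mono_rel[OF _ sorted_sort]) (use assms in \<open>simp add: divide_right_mono\<close>)
  then have "sort (map (\<lambda>x. x / t) xs) = map (\<lambda>x. x / t) (sort xs)"
    by (intro properties_for_sort) simp_all
  then show ?thesis
    unfolding desc_def by (simp add: rev_map)
qed

lemma desc_permutation:
  obtains p where "p permutes {..<length xs}" "\<And>i. i < length xs \<Longrightarrow> desc xs ! i = xs ! p i"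
proof -
  obtain p where "p permutes {..<length xs}" "permute_list p xs = desc xs"
    using mset_eq_permutation[of "desc xs" xs] by auto
  then show thesis
    using that permute_list_nth by metis
qed

lemma sum_nth_le_sum_take:
  fixes ys :: "'a::ordered_comm_monoid_add list"
  assumes sorted: "sorted_wrt (\<ge>) ys" and S: "S \<subseteq> {..<length ys}"
  shows "(\<Sum>k\<in>S. ys ! k) \<le> sum_list (take (card S) ys)"
proof -
  define L where "L = sorted_list_of_set S"
  have "finite S"
    using S finite_subset by blast
  then have L: "distinct L" "set L = S" "sorted_wrt (<) L" "length L = card S"
    by (simp_all add: L_def strict_sorted_list_of_set)
  have card_le: "card S \<le> length ys"
    using S by (metis card_lessThan card_mono finite_lessThan)
  have "(\<Sum>k\<in>S. ys ! k) = (\<Sum>r<card S. ys ! (L ! r))"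
    using sum_list_distinct_conv_sum_set[of L "(!) ys"] L
    by (simp add: sum_list_sum_nth atLeast0LessThan)
  also have "\<dots> \<le> (\<Sum>r<card S. ys ! r)"
  proof (rule sum_mono)
    fix r assume r: "r \<in> {..<card S}"
    then have "r \<le> L ! r" "L ! r < length ys"
      using L S sorted_wrt_less_idx nth_mem by fastforce+
    then show "ys ! (L ! r) \<le> ys ! r"
      using sorted by (metis order.refl order_le_less sorted_wrt_nth_less)
  qed
  also have "\<dots> = sum_list (take (card S) ys)"
    using card_le by (simp add: sum_list_sum_nth atLeast0LessThan min_def)
  finally show ?thesis .
qed

definition top_sum :: "nat \<Rightarrow> real list \<Rightarrow> real" where
  "top_sum m xs = sum_list (take m (desc xs))"

lemma top_sum_desc [simp]: "top_sum m (desc xs) = top_sum m xs"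
  by (simp add: top_sum_def)

lemma sum_le_top_sum:
  assumes S: "S \<subseteq> {..<length xs}"
  shows "(\<Sum>k\<in>S. xs ! k) \<le> top_sum (card S) xs"
proof -
  obtain p where p: "p permutes {..<length xs}" "\<And>i. i < length xs \<Longrightarrow> desc xs ! i = xs ! p i"
    using desc_permutation[of xs] by blast
  define S' where "S' = {i. i < length xs \<and> p i \<in> S}"
  have bij: "bij_betw p {..<length xs} {..<length xs}"
    using p(1) by (rule permutes_imp_bij)
  have inj: "inj_on p S'"
    using bij unfolding S'_def bij_betw_def by (auto intro: inj_on_subset)
  have image: "p ` S' = S"
    using bij S unfolding S'_def by (auto simp: bij_betw_def)
  have "(\<Sum>k\<in>S. xs ! k) = (\<Sum>i\<in>S'. xs ! p i)"
    unfolding image[symmetric] using inj by (simp add: sum.reindex)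
  also have "\<dots> = (\<Sum>i\<in>S'. desc xs ! i)"
    using p(2) by (intro sum.cong refl) (simp add: S'_def)
  also have "\<dots> \<le> top_sum (card S') xs"
    unfolding top_sum_def by (rule sum_nth_le_sum_take) (auto simp: sorted_wrt_desc S'_def)
  also have "card S' = card S"
    using card_image[OF inj] image by simp
  finally show ?thesis .
qed

lemma top_sum_attained:
  assumes m: "m \<le> length xs"
  obtains S where "S \<subseteq> {..<length xs}" "card S = m" "top_sum m xs = (\<Sum>k\<in>S. xs ! k)"
proof -
  obtain p where p: "p permutes {..<length xs}" "\<And>i. i < length xs \<Longrightarrow> desc xs ! i = xs ! p i"
    using desc_permutation[of xs] by blast
  have bij: "bij_betw p {..<length xs} {..<length xs}"
    using p(1) by (rule permutes_imp_bij)
  have inj: "inj_on p {..<m}"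
    using bij m unfolding bij_betw_def by (meson inj_on_subset lessThan_subset_iff)
  have sub: "p ` {..<m} \<subseteq> {..<length xs}"
    using bij m unfolding bij_betw_def by auto
  have "top_sum m xs = (\<Sum>i<m. desc xs ! i)"
    using m by (simp add: top_sum_def sum_list_sum_nth atLeast0LessThan min_def)
  also have "\<dots> = (\<Sum>i<m. xs ! p i)"
    using p(2) m by simp
  also have "\<dots> = (\<Sum>k\<in>p ` {..<m}. xs ! k)"
    using sum.reindex[OF inj, of "\<lambda>k. xs ! k"] by simp
  finally show thesis
    using that[OF sub] card_image[OF inj] by simp
qed

lemma sum_nth_map_upt:
  "S \<subseteq> {..<n} \<Longrightarrow> (\<Sum>k\<in>S. map f [0..<n] ! k) = (\<Sum>k\<in>S. f k)"
  by (intro sum.cong) auto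

lemma top_sum_sublinear:
  assumes L: "finite L" "\<forall>l\<in>L. 0 \<le> c l" and m: "m \<le> n"
  shows "top_sum m (map (\<lambda>k. \<Sum>l\<in>L. c l * f l k) [0..<n])
    \<le> (\<Sum>l\<in>L. c l * top_sum m (map (f l) [0..<n]))"
proof -
  let ?g = "\<lambda>k. \<Sum>l\<in>L. c l * f l k"
  obtain S where S: "S \<subseteq> {..<n}" "card S = m"
    and attained: "top_sum m (map ?g [0..<n]) = (\<Sum>k\<in>S. map ?g [0..<n] ! k)"
    using top_sum_attained[of m "map ?g [0..<n]"] m by auto
  have "top_sum m (map ?g [0..<n]) = (\<Sum>k\<in>S. \<Sum>l\<in>L. c l * f l k)"
    using attained S(1) by (simp add: sum_nth_map_upt)
  also have "\<dots> = (\<Sum>l\<in>L. \<Sum>k\<in>S. c l * f l k)"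
    by (rule sum.swap)
  also have "\<dots> = (\<Sum>l\<in>L. c l * (\<Sum>k\<in>S. map (f l) [0..<n] ! k))"
    using S(1) by (simp add: sum_distrib_left sum_nth_map_upt)
  also have "\<dots> \<le> (\<Sum>l\<in>L. c l * top_sum m (map (f l) [0..<n]))"
  proof (rule sum_mono)
    fix l assume "l \<in> L"
    have "(\<Sum>k\<in>S. map (f l) [0..<n] ! k) \<le> top_sum m (map (f l) [0..<n])"
      using sum_le_top_sum[of S "map (f l) [0..<n]"] S by simp
    then show "c l * (\<Sum>k\<in>S. map (f l) [0..<n] ! k) \<le> c l * top_sum m (map (f l) [0..<n])"
      using L(2) \<open>l \<in> L\<close> by (simp add: mult_left_mono)
  qed
  finally show ?thesis .
qed

lemma sum_nth_append_shifted:
  assumes S1: "S1 \<subseteq> {..<length xs}" and S2: "finite S2"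
  shows "(\<Sum>k \<in> S1 \<union> (+) (length xs) ` S2. (xs @ ys) ! k) = (\<Sum>k\<in>S1. xs ! k) + (\<Sum>k\<in>S2. ys ! k)"
    and "card (S1 \<union> (+) (length xs) ` S2) = card S1 + card S2"
proof -
  have disjoint: "finite S1" "S1 \<inter> (+) (length xs) ` S2 = {}"
    using S1 by (auto intro: finite_subset)
  have "(\<Sum>k\<in>S1. (xs @ ys) ! k) = (\<Sum>k\<in>S1. xs ! k)"
    using S1 by (intro sum.cong) (auto simp: nth_append)
  then show "(\<Sum>k \<in> S1 \<union> (+) (length xs) ` S2. (xs @ ys) ! k) = (\<Sum>k\<in>S1. xs ! k) + (\<Sum>k\<in>S2. ys ! k)"
    using disjoint S2 by (simp add: sum.union_disjoint sum.reindex)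
  show "card (S1 \<union> (+) (length xs) ` S2) = card S1 + card S2"
    using disjoint S2 by (simp add: card_Un_disjoint card_image)
qed

lemma top_sum_append_split:
  assumes "m \<le> length xs + length ys"
  shows "\<exists>m1 m2. m = m1 + m2 \<and> m1 \<le> length xs \<and> m2 \<le> length ys \<and>
    top_sum m (xs @ ys) \<le> top_sum m1 xs + top_sum m2 ys"
proof -
  obtain S where S: "S \<subseteq> {..<length xs + length ys}" "card S = m"
    "top_sum m (xs @ ys) = (\<Sum>k\<in>S. (xs @ ys) ! k)"
    using top_sum_attained[of m "xs @ ys"] assms by auto
  define S1 where "S1 = S \<inter> {..<length xs}"
  define S2 where "S2 = {k. length xs + k \<in> S}"
  have S1: "S1 \<subseteq> {..<length xs}" and S2: "S2 \<subseteq> {..<length ys}"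
    using S(1) by (auto simp: S1_def S2_def)
  have "S = S1 \<union> (+) (length xs) ` S2"
  proof (intro equalityI subsetI)
    fix x assume "x \<in> S"
    then show "x \<in> S1 \<union> (+) (length xs) ` S2"
      by (cases "x < length xs") (auto simp: S1_def S2_def image_iff intro!: exI[of _ "x - length xs"])
  qed (auto simp: S1_def S2_def)
  then have "m = card S1 + card S2"
    and "top_sum m (xs @ ys) = (\<Sum>k\<in>S1. xs ! k) + (\<Sum>k\<in>S2. ys ! k)"
    using sum_nth_append_shifted[OF S1 finite_subset[OF S2]] S by auto
  moreover have "(\<Sum>k\<in>S1. xs ! k) + (\<Sum>k\<in>S2. ys ! k) \<le> top_sum (card S1) xs + top_sum (card S2) ys"
    using S1 S2 by (intro add_mono sum_le_top_sum)
  moreover have "card S1 \<le> length xs" "card S2 \<le> length ys"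
    using S1 S2 by (metis card_lessThan card_mono finite_lessThan)+
  ultimately show ?thesis
    by (intro exI[of _ "card S1"] exI[of _ "card S2"]) simp
qed

lemma top_sum_append_ge:
  assumes "m1 \<le> length xs" "m2 \<le> length ys"
  shows "top_sum m1 xs + top_sum m2 ys \<le> top_sum (m1 + m2) (xs @ ys)"
proof -
  obtain S1 where S1: "S1 \<subseteq> {..<length xs}" "card S1 = m1" "top_sum m1 xs = (\<Sum>k\<in>S1. xs ! k)"
    by (rule top_sum_attained[OF assms(1)])
  obtain S2 where S2: "S2 \<subseteq> {..<length ys}" "card S2 = m2" "top_sum m2 ys = (\<Sum>k\<in>S2. ys ! k)"
    by (rule top_sum_attained[OF assms(2)])
  have "finite S2"
    by (rule finite_subset[OF S2(1)]) simp
  moreover have "S1 \<union> (+) (length xs) ` S2 \<subseteq> {..<length (xs @ ys)}"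
    using S1(1) S2(1) by auto
  ultimately show ?thesis
    using sum_le_top_sum[of "S1 \<union> (+) (length xs) ` S2" "xs @ ys"]
      sum_nth_append_shifted[OF S1(1)] S1 S2 by simp
qed

abbreviation blocks :: "nat \<Rightarrow> nat \<Rightarrow> (nat \<Rightarrow> nat \<Rightarrow> 'a) \<Rightarrow> 'a list" where
  "blocks M N F \<equiv> concat (map (\<lambda>i. map (F i) [0..<N]) [0..<M])"

lemma length_blocks [simp]: "length (blocks M N F) = M * N"
  by (induction M) auto

lemma sum_list_blocks: "sum_list (blocks M N F) = (\<Sum>i<M. \<Sum>k<N. F i k)"
  by (induction M) (auto simp: interv_sum_list_conv_sum_set_nat atLeast0LessThan)

lemma top_sum_blocks_split:
  assumes "m \<le> M * N"
  shows "\<exists>c. (\<Sum>i<M. c i) = m \<and> (\<forall>i<M. c i \<le> N) \<and>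
    top_sum m (blocks M N F) \<le> (\<Sum>i<M. top_sum (c i) (map (F i) [0..<N]))"
  using assms
proof (induction M arbitrary: m)
  case 0
  then show ?case
    by (simp add: top_sum_def)
next
  case (Suc M)
  obtain m1 m2 where m: "m = m1 + m2" "m1 \<le> M * N" "m2 \<le> N"
    and split: "top_sum m (blocks (Suc M) N F) \<le> top_sum m1 (blocks M N F) + top_sum m2 (map (F M) [0..<N])"
    using top_sum_append_split[of m "blocks M N F" "map (F M) [0..<N]"] Suc.prems by auto
  obtain c where c: "(\<Sum>i<M. c i) = m1" "\<forall>i<M. c i \<le> N"
    "top_sum m1 (blocks M N F) \<le> (\<Sum>i<M. top_sum (c i) (map (F i) [0..<N]))"
    using Suc.IH[OF m(2)] by auto
  have "(\<Sum>i<M. (c(M := m2)) i) = (\<Sum>i<M. c i)"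
    "(\<Sum>i<M. top_sum ((c(M := m2)) i) (map (F i) [0..<N])) = (\<Sum>i<M. top_sum (c i) (map (F i) [0..<N]))"
    by (auto intro: sum.cong)
  then show ?case
    using c m split by (intro exI[of _ "c(M := m2)"]) (auto simp: less_Suc_eq)
qed

lemma top_sum_blocks_ge:
  assumes "\<forall>i<M. c i \<le> N"
  shows "(\<Sum>i<M. top_sum (c i) (map (F i) [0..<N])) \<le> top_sum (\<Sum>i<M. c i) (blocks M N F)"
  using assms
proof (induction M)
  case 0
  then show ?case
    by (simp add: top_sum_def)
next
  case (Suc M)
  have "(\<Sum>i<M. c i) \<le> M * N"
    using Suc.prems sum_bounded_above[of "{..<M}" c N] by simp
  then have "top_sum (\<Sum>i<M. c i) (blocks M N F) + top_sum (c M) (map (F M) [0..<N])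
      \<le> top_sum (\<Sum>i<Suc M. c i) (blocks (Suc M) N F)"
    using top_sum_append_ge[of "\<Sum>i<M. c i" "blocks M N F" "c M" "map (F M) [0..<N]"] Suc.prems
    by simp
  then show ?case
    using Suc by simp
qed

lemma majorized_iff_top_sum:
  assumes "length u = length w"
  shows "u \<prec>\<^sub>m w \<longleftrightarrow>
    sum_list u = sum_list w \<and> (\<forall>m\<in>{1..length u}. top_sum m u \<le> top_sum m w)"
  using assms unfolding majorized_def top_sum_def Let_def by simp

lemma sum_mixture_regroup:
  fixes a :: "'l \<Rightarrow> nat \<Rightarrow> 'j \<Rightarrow> 'a::semiring_0"
  assumes "\<forall>l\<in>\<Lambda>. \<forall>i<M. (\<Sum>j\<in>J. a l i j) = \<kappa> l"
  shows "(\<Sum>i<M. \<Sum>j\<in>J. \<Sum>l\<in>\<Lambda>. a l i j * g l i) = (\<Sum>l\<in>\<Lambda>. \<kappa> l * (\<Sum>i<M. g l i))"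
proof -
  have "(\<Sum>i<M. \<Sum>j\<in>J. \<Sum>l\<in>\<Lambda>. a l i j * g l i) = (\<Sum>i<M. \<Sum>l\<in>\<Lambda>. \<Sum>j\<in>J. a l i j * g l i)"
    by (rule sum.cong[OF refl], rule sum.swap)
  also have "\<dots> = (\<Sum>i<M. \<Sum>l\<in>\<Lambda>. \<kappa> l * g l i)"
  proof (intro sum.cong refl)
    fix i l assume "i \<in> {..<M}" "l \<in> \<Lambda>"
    have "(\<Sum>j\<in>J. a l i j * g l i) = (\<Sum>j\<in>J. a l i j) * g l i"
      by (rule sum_distrib_right[symmetric])
    then show "(\<Sum>j\<in>J. a l i j * g l i) = \<kappa> l * g l i"
      using assms \<open>i \<in> {..<M}\<close> \<open>l \<in> \<Lambda>\<close> by simp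
  qed
  also have "\<dots> = (\<Sum>l\<in>\<Lambda>. \<kappa> l * (\<Sum>i<M. g l i))"
    by (subst sum.swap) (simp add: sum_distrib_left)
  finally show ?thesis .
qed

lemma sum_list_blockwise_mixture:
  assumes "\<forall>l\<in>\<Lambda>. \<forall>i<M. (\<Sum>j\<in>J. a l i j) = \<kappa> l"
  shows "sum_list (blocks M N (\<lambda>i k. \<Sum>j\<in>J. desc (map (\<lambda>k. \<Sum>l\<in>\<Lambda>. a l i j * P l i k) [0..<N]) ! k))
    = (\<Sum>l\<in>\<Lambda>. \<kappa> l * sum_list (blocks M N (P l)))"
proof -
  let ?D = "\<lambda>i j. map (\<lambda>k. \<Sum>l\<in>\<Lambda>. a l i j * P l i k) [0..<N]"
  have sum_desc: "(\<Sum>k<N. desc (?D i j) ! k) = (\<Sum>l\<in>\<Lambda>. a l i j * (\<Sum>k<N. P l i k))" for i j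
  proof -
    have "(\<Sum>k<N. desc (?D i j) ! k) = sum_list (desc (?D i j))"
      by (simp add: sum_list_sum_nth atLeast0LessThan)
    also have "\<dots> = sum_list (?D i j)"
      by simp
    also have "\<dots> = (\<Sum>k<N. \<Sum>l\<in>\<Lambda>. a l i j * P l i k)"
      by (simp add: interv_sum_list_conv_sum_set_nat atLeast0LessThan)
    also have "\<dots> = (\<Sum>l\<in>\<Lambda>. a l i j * (\<Sum>k<N. P l i k))"
      by (subst sum.swap) (simp add: sum_distrib_left)
    finally show ?thesis .
  qed
  have "sum_list (blocks M N (\<lambda>i k. \<Sum>j\<in>J. desc (?D i j) ! k)) = (\<Sum>i<M. \<Sum>j\<in>J. \<Sum>k<N. desc (?D i j) ! k)"
    unfolding sum_list_blocks by (rule sum.cong[OF refl], rule sum.swap)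
  also have "\<dots> = (\<Sum>l\<in>\<Lambda>. \<kappa> l * (\<Sum>i<M. \<Sum>k<N. P l i k))"
    unfolding sum_desc by (rule sum_mixture_regroup[OF assms])
  finally show ?thesis
    by (simp add: sum_list_blocks)
qed

lemma top_sum_blockwise_mixture_le:
  assumes fin: "finite \<Lambda>" "finite J"
    and a_nonneg: "\<forall>l\<in>\<Lambda>. \<forall>i<M. \<forall>j\<in>J. 0 \<le> a l i j"
    and a_sum: "\<forall>l\<in>\<Lambda>. \<forall>i<M. (\<Sum>j\<in>J. a l i j) = \<kappa> l"
    and \<kappa>_nonneg: "\<forall>l\<in>\<Lambda>. 0 \<le> \<kappa> l"
    and m: "m \<le> M * N"
  shows "top_sum m (blocks M N (\<lambda>i k. \<Sum>j\<in>J. desc (map (\<lambda>k. \<Sum>l\<in>\<Lambda>. a l i j * P l i k) [0..<N]) ! k))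
    \<le> (\<Sum>l\<in>\<Lambda>. \<kappa> l * top_sum m (blocks M N (P l)))"
proof -
  let ?D = "\<lambda>i j. map (\<lambda>k. \<Sum>l\<in>\<Lambda>. a l i j * P l i k) [0..<N]"
  obtain c where c: "(\<Sum>i<M. c i) = m" "\<forall>i<M. c i \<le> N"
    and split: "top_sum m (blocks M N (\<lambda>i k. \<Sum>j\<in>J. desc (?D i j) ! k))
      \<le> (\<Sum>i<M. top_sum (c i) (map (\<lambda>k. \<Sum>j\<in>J. desc (?D i j) ! k) [0..<N]))"
    using top_sum_blocks_split[OF m, where F = "\<lambda>i k. \<Sum>j\<in>J. desc (?D i j) ! k"] by auto
  note split
  also have "(\<Sum>i<M. top_sum (c i) (map (\<lambda>k. \<Sum>j\<in>J. desc (?D i j) ! k) [0..<N]))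
      \<le> (\<Sum>i<M. \<Sum>j\<in>J. top_sum (c i) (?D i j))"
  proof (rule sum_mono)
    fix i assume "i \<in> {..<M}"
    then have "top_sum (c i) (map (\<lambda>k. \<Sum>j\<in>J. 1 * desc (?D i j) ! k) [0..<N])
        \<le> (\<Sum>j\<in>J. 1 * top_sum (c i) (map (\<lambda>k. desc (?D i j) ! k) [0..<N]))"
      using c(2) fin(2) top_sum_sublinear[of J "\<lambda>_. 1" "c i" N "\<lambda>j k. desc (?D i j) ! k"] by simp
    moreover have "map (\<lambda>k. desc (?D i j) ! k) [0..<N] = desc (?D i j)" for j
      using map_nth[of "desc (?D i j)"] by simp
    ultimately show "top_sum (c i) (map (\<lambda>k. \<Sum>j\<in>J. desc (?D i j) ! k) [0..<N])
        \<le> (\<Sum>j\<in>J. top_sum (c i) (?D i j))"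
      by simp
  qed
  also have "\<dots> \<le> (\<Sum>i<M. \<Sum>j\<in>J. \<Sum>l\<in>\<Lambda>. a l i j * top_sum (c i) (map (P l i) [0..<N]))"
  proof (intro sum_mono)
    fix i j assume "i \<in> {..<M}" "j \<in> J"
    then show "top_sum (c i) (?D i j) \<le> (\<Sum>l\<in>\<Lambda>. a l i j * top_sum (c i) (map (P l i) [0..<N]))"
      using top_sum_sublinear[of \<Lambda> "\<lambda>l. a l i j" "c i" N "\<lambda>l k. P l i k"] fin(1) a_nonneg c(2)
      by simp
  qed
  also have "\<dots> = (\<Sum>l\<in>\<Lambda>. \<kappa> l * (\<Sum>i<M. top_sum (c i) (map (P l i) [0..<N])))"
    by (rule sum_mixture_regroup[OF a_sum])
  also have "\<dots> \<le> (\<Sum>l\<in>\<Lambda>. \<kappa> l * top_sum m (blocks M N (P l)))"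
  proof (rule sum_mono)
    fix l assume "l \<in> \<Lambda>"
    have "(\<Sum>i<M. top_sum (c i) (map (P l i) [0..<N])) \<le> top_sum m (blocks M N (P l))"
      using top_sum_blocks_ge[OF c(2), of "P l"] c(1) by simp
    then show "\<kappa> l * (\<Sum>i<M. top_sum (c i) (map (P l i) [0..<N])) \<le> \<kappa> l * top_sum m (blocks M N (P l))"
      using \<kappa>_nonneg \<open>l \<in> \<Lambda>\<close> by (simp add: mult_left_mono)
  qed
  finally show ?thesis .
qed

lemma blockwise_mixture_majorized:
  assumes fin: "finite \<Lambda>" "finite J"
    and a_nonneg: "\<forall>l\<in>\<Lambda>. \<forall>i<M. \<forall>j\<in>J. 0 \<le> a l i j"
    and a_sum: "\<forall>l\<in>\<Lambda>. \<forall>i<M. (\<Sum>j\<in>J. a l i j) = \<kappa> l"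
    and \<kappa>_nonneg: "\<forall>l\<in>\<Lambda>. 0 \<le> \<kappa> l" and \<kappa>_sum: "(\<Sum>l\<in>\<Lambda>. \<kappa> l) = 1"
    and len: "length s = M * N"
    and maj: "\<forall>l\<in>\<Lambda>. blocks M N (P l) \<prec>\<^sub>m s"
  shows "blocks M N (\<lambda>i k. \<Sum>j\<in>J. desc (map (\<lambda>k. \<Sum>l\<in>\<Lambda>. a l i j * P l i k) [0..<N]) ! k) \<prec>\<^sub>m s"
    (is "?G \<prec>\<^sub>m s")
proof -
  have convex: "(\<Sum>l\<in>\<Lambda>. \<kappa> l * x) = x" for x
    using \<kappa>_sum by (simp add: sum_distrib_right[symmetric])
  have sum_l: "sum_list (blocks M N (P l)) = sum_list s"
    and top_l: "\<forall>m\<in>{1..M * N}. top_sum m (blocks M N (P l)) \<le> top_sum m s" if "l \<in> \<Lambda>" for l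
    using maj that majorized_iff_top_sum[of "blocks M N (P l)" s] len by simp_all
  have "sum_list ?G = (\<Sum>l\<in>\<Lambda>. \<kappa> l * sum_list (blocks M N (P l)))"
    by (rule sum_list_blockwise_mixture[OF a_sum])
  also have "\<dots> = sum_list s"
    using sum_l by (simp add: convex)
  moreover have "top_sum m ?G \<le> top_sum m s" if m: "m \<in> {1..M * N}" for m
  proof -
    have "top_sum m ?G \<le> (\<Sum>l\<in>\<Lambda>. \<kappa> l * top_sum m (blocks M N (P l)))"
      using m by (intro top_sum_blockwise_mixture_le[OF fin a_nonneg a_sum \<kappa>_nonneg]) simp
    also have "\<dots> \<le> (\<Sum>l\<in>\<Lambda>. \<kappa> l * top_sum m s)"
      using top_l m \<kappa>_nonneg by (intro sum_mono mult_left_mono) simp_all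
    also have "\<dots> = top_sum m s"
      by (rule convex)
    finally show ?thesis .
  qed
  ultimately show ?thesis
    using len majorized_iff_top_sum[of ?G s] by simp
qed

(* Covers an outcome of probability t = 0, whose conditional distribution is the junk value x / 0 = 0. *)
lemma desc_divide_mult_nth:
  fixes t :: real
  assumes "0 \<le> t" and "t = 0 \<Longrightarrow> set xs \<subseteq> {0}" and "k < length xs"
  shows "desc (map (\<lambda>x. x / t) xs) ! k * t = desc xs ! k"
proof (cases "t = 0")
  case True
  then have "desc xs ! k \<in> {0}"
    using assms(2,3) nth_mem[of k "desc xs"] by auto
  then show ?thesis
    using True by simp
next
  case False
  then show ?thesis
    using assms by (simp add: desc_map_divide)
qed

lemma expect_eq_sum:
  assumes "A \<in> carrier_mat N N" "v \<in> carrier_vec N"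
  shows "expect v A = (\<Sum>r<N. \<Sum>c<N. A $$ (r, c) * v $ c * cnj (v $ r))"
  using assms unfolding expect_def
  by (simp add: mult_mat_vec_def scalar_prod_def row_def sum_distrib_right atLeast0LessThan mult.assoc)

lemma expect_mat_sum:
  assumes v: "v \<in> carrier_vec N" and A: "\<forall>l\<in>L. A l \<in> carrier_mat N N"
  shows "expect v (mat N N (\<lambda>(r, c). \<Sum>l\<in>L. w l * A l $$ (r, c))) = (\<Sum>l\<in>L. w l * expect v (A l))"
proof -
  have "expect v (mat N N (\<lambda>(r, c). \<Sum>l\<in>L. w l * A l $$ (r, c)))
      = (\<Sum>r<N. \<Sum>c<N. \<Sum>l\<in>L. w l * (A l $$ (r, c) * v $ c * cnj (v $ r)))"
    by (simp add: expect_eq_sum[OF _ v] sum_distrib_right mult.assoc)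
  also have "\<dots> = (\<Sum>l\<in>L. \<Sum>r<N. \<Sum>c<N. w l * (A l $$ (r, c) * v $ c * cnj (v $ r)))"
    by (simp only: sum.swap[of _ L])
  also have "\<dots> = (\<Sum>l\<in>L. w l * expect v (A l))"
    using A by (simp add: expect_eq_sum[OF _ v] sum_distrib_left)
  finally show ?thesis .
qed

lemma mtrace_mat_sum:
  assumes "\<forall>l\<in>L. A l \<in> carrier_mat N N"
  shows "mtrace (mat N N (\<lambda>(r, c). \<Sum>l\<in>L. w l * A l $$ (r, c))) = (\<Sum>l\<in>L. w l * mtrace (A l))"
proof -
  have "mtrace (mat N N (\<lambda>(r, c). \<Sum>l\<in>L. w l * A l $$ (r, c))) = (\<Sum>k<N. \<Sum>l\<in>L. w l * A l $$ (k, k))"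
    by (simp add: mtrace_def)
  also have "\<dots> = (\<Sum>l\<in>L. \<Sum>k<N. w l * A l $$ (k, k))"
    by (rule sum.swap)
  also have "\<dots> = (\<Sum>l\<in>L. w l * mtrace (A l))"
    using assms by (intro sum.cong refl) (auto simp: mtrace_def sum_distrib_left)
  finally show ?thesis .
qed

lemma desc_conditional_mult_prob_mixture:
  fixes w :: "'l \<Rightarrow> real"
  assumes fin: "finite L" and w: "\<forall>l\<in>L. 0 \<le> w l" and \<rho>: "\<forall>l\<in>L. density N (\<rho> l)"
    and b: "\<forall>k<N. b k \<in> carrier_vec N"
    and \<sigma>: "\<sigma> = mat N N (\<lambda>(r, c). \<Sum>l\<in>L. complex_of_real (w l) * \<rho> l $$ (r, c))"
    and k: "k < N"
  shows "desc (map (\<lambda>k'. Re (expect (b k') \<sigma>) / Re (mtrace \<sigma>)) [0..<N]) ! k * Re (mtrace \<sigma>)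
    = desc (map (\<lambda>k. \<Sum>l\<in>L. w l * Re (expect (b k) (\<rho> l))) [0..<N]) ! k"
proof -
  let ?x = "map (\<lambda>k. \<Sum>l\<in>L. w l * Re (expect (b k) (\<rho> l))) [0..<N]"
  have carrier: "\<forall>l\<in>L. \<rho> l \<in> carrier_mat N N" and trace: "\<forall>l\<in>L. mtrace (\<rho> l) = 1"
    using \<rho> by (auto simp: density_def psd_def)
  have prob: "Re (mtrace \<sigma>) = (\<Sum>l\<in>L. w l)"
    using \<sigma> mtrace_mat_sum[OF carrier] trace by (simp add: Re_sum)
  have "Re (expect (b k') \<sigma>) = (\<Sum>l\<in>L. w l * Re (expect (b k') (\<rho> l)))" if "k' < N" for k'
    using \<sigma> expect_mat_sum[OF _ carrier] b that by (simp add: Re_sum)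
  then have conditional: "map (\<lambda>k'. Re (expect (b k') \<sigma>) / (\<Sum>l\<in>L. w l)) [0..<N]
      = map (\<lambda>x. x / (\<Sum>l\<in>L. w l)) ?x"
    unfolding map_map comp_def by (intro map_cong refl) simp
  have "set ?x \<subseteq> {0}" if "(\<Sum>l\<in>L. w l) = 0"
    using that fin w by (auto simp: sum_nonneg_eq_0_iff)
  moreover have "0 \<le> (\<Sum>l\<in>L. w l)"
    using w by (simp add: sum_nonneg)
  ultimately have "desc (map (\<lambda>x. x / (\<Sum>l\<in>L. w l)) ?x) ! k * (\<Sum>l\<in>L. w l) = desc ?x ! k"
    using desc_divide_mult_nth[of "\<Sum>l\<in>L. w l" ?x k] k by simp
  then show ?thesis
    unfolding prob conditional .
qed

theorem theorem1:
  fixes dA N M :: nat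
    and \<rho>AB :: "complex mat"
    and E :: "nat \<Rightarrow> nat \<Rightarrow> complex mat"
    and b :: "nat \<Rightarrow> nat \<Rightarrow> complex vec"
    and \<Lambda> :: "'l set"
    and \<kappa> :: "'l \<Rightarrow> real"
    and pl :: "'l \<Rightarrow> nat \<Rightarrow> nat \<Rightarrow> real"
    and \<rho>l :: "'l \<Rightarrow> complex mat"
    and s :: "real list"
  assumes state: "density (dA * N) \<rho>AB"
    and meas_A: "\<forall>i<M. povm dA N (E i)"
    and meas_B: "\<forall>i<M. onb N (b i)"
    and fin: "finite \<Lambda>"
    and kappa_nonneg: "\<forall>l\<in>\<Lambda>. 0 \<le> \<kappa> l"
    and kappa_sum: "(\<Sum>l\<in>\<Lambda>. \<kappa> l) = 1"
    and p_nonneg: "\<forall>l\<in>\<Lambda>. \<forall>i<M. \<forall>j<N. 0 \<le> pl l i j"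
    and p_sum: "\<forall>l\<in>\<Lambda>. \<forall>i<M. (\<Sum>j<N. pl l i j) = 1"
    and rho_lambda: "\<forall>l\<in>\<Lambda>. density N (\<rho>l l)"
    and LHS: "\<forall>i<M. \<forall>j<N. cond_state dA N \<rho>AB (E i j) =
               mat N N (\<lambda>(r, c). \<Sum>l\<in>\<Lambda>. complex_of_real (\<kappa> l * pl l i j) * \<rho>l l $$ (r, c))"
    and lub: "maj_lub (M * N)
               {concat (map (\<lambda>i. prob_vec N (b i) \<rho>) [0..<M]) | \<rho>. density N \<rho>} s"
  shows "concat (map (\<lambda>i. map (\<lambda>k.
            \<Sum>j<N. desc (map (\<lambda>k'. Re (expect (b i k') (cond_state dA N \<rho>AB (E i j)))
                                    / Re (mtrace (cond_state dA N \<rho>AB (E i j)))) [0..<N]) ! k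
                  * Re (mtrace (cond_state dA N \<rho>AB (E i j))))
            [0..<N]) [0..<M]) \<prec>\<^sub>m s"
proof -
  define a where "a l i j = \<kappa> l * pl l i j" for l i j
  define P where "P l i k = Re (expect (b i k) (\<rho>l l))" for l i k
  have a_nonneg: "\<forall>l\<in>\<Lambda>. \<forall>i<M. \<forall>j\<in>{..<N}. 0 \<le> a l i j"
    using kappa_nonneg p_nonneg by (simp add: a_def)
  have a_sum: "\<forall>l\<in>\<Lambda>. \<forall>i<M. (\<Sum>j\<in>{..<N}. a l i j) = \<kappa> l"
    using p_sum by (simp add: a_def sum_distrib_left[symmetric])
  have "desc (map (\<lambda>k'. Re (expect (b i k') (cond_state dA N \<rho>AB (E i j)))
                       / Re (mtrace (cond_state dA N \<rho>AB (E i j)))) [0..<N]) ! k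
        * Re (mtrace (cond_state dA N \<rho>AB (E i j)))
      = desc (map (\<lambda>k. \<Sum>l\<in>\<Lambda>. a l i j * P l i k) [0..<N]) ! k"
    if "i < M" "j < N" "k < N" for i j k
    using that LHS meas_B kappa_nonneg p_nonneg unfolding a_def P_def onb_def
    by (intro desc_conditional_mult_prob_mixture[OF fin _ rho_lambda]) auto
  then have "concat (map (\<lambda>i. map (\<lambda>k.
            \<Sum>j<N. desc (map (\<lambda>k'. Re (expect (b i k') (cond_state dA N \<rho>AB (E i j)))
                                    / Re (mtrace (cond_state dA N \<rho>AB (E i j)))) [0..<N]) ! k
                  * Re (mtrace (cond_state dA N \<rho>AB (E i j))))
            [0..<N]) [0..<M])
      = blocks M N (\<lambda>i k. \<Sum>j\<in>{..<N}. desc (map (\<lambda>k. \<Sum>l\<in>\<Lambda>. a l i j * P l i k) [0..<N]) ! k)"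
    by (intro arg_cong[where f = concat] map_cong refl sum.cong) auto
  moreover have "blocks M N (P l) \<prec>\<^sub>m s" if "l \<in> \<Lambda>" for l
  proof -
    have "blocks M N (P l) \<in> {concat (map (\<lambda>i. prob_vec N (b i) \<rho>) [0..<M]) | \<rho>. density N \<rho>}"
      using rho_lambda that unfolding prob_vec_def P_def by blast
    then show ?thesis
      using lub unfolding maj_lub_def by blast
  qed
  moreover have "length s = M * N"
    using lub by (simp add: maj_lub_def)
  ultimately show ?thesis
    using blockwise_mixture_majorized[OF fin _ a_nonneg a_sum kappa_nonneg kappa_sum] by simp
qed

end
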